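(* Let $\omega=e^{2\pi i/3}$, $\mathcal{E}=\mathbb{Z}[\omega]$, $\theta=\omega-\bar\omega$, and identify $\mathbb{C}^3$ with $\mathbb{R}^6$. Let $\Lambda_1,\dots,\Lambda_4\subset\mathbb{C}^3$ be the sets of $\mathcal{E}$-linear combinations of the rows of, respectively, $$\begin{bmatrix}\theta&0&0\\0&\theta&0\\0&0&\theta\end{bmatrix},\ \begin{bmatrix}1&1&1\\1&\omega&\bar\omega\\1&\bar\omega&\omega\end{bmatrix},\ \begin{bmatrix}1&1&\omega\\1&\omega&1\\1&\bar\omega&\bar\omega\end{bmatrix},\ \begin{bmatrix}1&1&\bar\omega\\1&\omega&\omega\\1&\bar\omega&1\end{bmatrix}$$ (each a copy of $\mathcal{E}^3\cong A_2^3$). Then $\Lambda_1\cap\Lambda_2\cap\Lambda_3\cap\Lambda_4$ is a lattice similar to $E_6^\ast$, the dual of the root lattice $E_6$.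
   Context: $\mathcal{E}$ is the ring of Eisenstein integers, which as a real 2-dimensional lattice is similar to the hexagonal lattice $A_2$. Two lattices are similar if one is mapped to the other by a linear map multiplying all inner products by a common positive constant. *)

theory Defs
  imports "HOL-Analysis.Analysis"
begin

definition omega :: complex where
  "omega = exp (2 * of_real pi * \<i> / 3)"

definition theta :: complex where
  "theta = omega - cnj omega"

definition eisenstein :: "complex set" where
  "eisenstein = {of_int m + of_int n * omega | m n. True}"

definition eis_span3 :: "complex^3 \<Rightarrow> complex^3 \<Rightarrow> complex^3 \<Rightarrow> (complex^3) set" where
  "eis_span3 r1 r2 r3 = {a *s r1 + b *s r2 + c *s r3 | a b c.
      a \<in> eisenstein \<and> b \<in> eisenstein \<and> c \<in> eisenstein}"

definition Lambda1 :: "(complex^3) set" where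
  "Lambda1 = eis_span3 (vector [theta, 0, 0]) (vector [0, theta, 0]) (vector [0, 0, theta])"

definition Lambda2 :: "(complex^3) set" where
  "Lambda2 = eis_span3 (vector [1, 1, 1]) (vector [1, omega, cnj omega]) (vector [1, cnj omega, omega])"

definition Lambda3 :: "(complex^3) set" where
  "Lambda3 = eis_span3 (vector [1, 1, omega]) (vector [1, omega, 1]) (vector [1, cnj omega, cnj omega])"

definition Lambda4 :: "(complex^3) set" where
  "Lambda4 = eis_span3 (vector [1, 1, cnj omega]) (vector [1, omega, omega]) (vector [1, cnj omega, 1])"

definition E8 :: "(real^8) set" where
  "E8 = {x. ((\<forall>i. x$i \<in> \<int>) \<or> (\<forall>i. x$i + 1/2 \<in> \<int>)) \<and>
            (\<exists>k::int. (\<Sum>i\<in>UNIV. x$i) = 2 * of_int k)}"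

text \<open>The hyperplane section V = {x5 = x6 = x7} (indices of the numeral type 8 are 0..7, i.e. the last three coordinates) of R^8, containing E6.\<close>
definition E6_space :: "(real^8) set" where
  "E6_space = {x. x$5 = x$6 \<and> x$6 = x$7}"

text \<open>Root lattice E6 = vectors of E8 orthogonal to the A2 spanned by the last three coordinates e5-e6, e6-e7.\<close>
definition E6 :: "(real^8) set" where
  "E6 = E8 \<inter> E6_space"

definition E6_dual :: "(real^8) set" where
  "E6_dual = {y \<in> E6_space. \<forall>x\<in>E6. inner y x \<in> \<int>}"

text \<open>A set L (in C^3 = R^6 with the standard real inner product Re(sum x_i conj y_i))
  is similar to E6*: the image of E6* under a real-linear map which multiplies all inner
  products by a common positive constant.\<close>
definition similar_to_E6_dual :: "(complex^3) set \<Rightarrow> bool" where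
  "similar_to_E6_dual L \<longleftrightarrow> (\<exists>f :: real^8 \<Rightarrow> complex^3. \<exists>c::real. linear f \<and> c > 0 \<and>
      (\<forall>x\<in>E6_space. \<forall>y\<in>E6_space. inner (f x) (f y) = c * inner x y) \<and>
      f ` E6_dual = L)"

end

theory Submission
  imports Defs
begin

text \<open>
  Writing every point of \<open>Lambda1\<close> as \<open>theta * y\<close> with \<open>y\<close> in the Eisenstein
  integers cubed, the extra condition imposed by \<open>Lambda2\<close> is that \<open>theta\<close> divides
  \<open>y1 + y2 + y3\<close>. \<open>Lambda3\<close> and \<open>Lambda4\<close> arise from \<open>Lambda2\<close> by multiplying
  the last coordinate by \<open>omega\<close> resp. \<open>cnj omega\<close>, units congruent to 1 modulo
  \<open>theta\<close>, so they impose nothing further. Since \<open>theta\<close> divides \<open>m + n omega\<close> iff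
  3 divides \<open>m + n\<close>, the intersection is a rank 6 lattice given by one congruence mod 3.

  On the other side, six roots of \<open>E6\<close> form a \<open>\<int>\<close>-basis, so \<open>E6*\<close> consists of the
  vectors of the span of \<open>E6\<close> having integral inner products with them. Sending the dual
  basis to suitable vectors of the intersection gives a map scaling inner products by 9/2 and
  carrying \<open>E6*\<close> onto the intersection.
\<close>

lemma omega_eq: "omega = Complex (-1/2) (sqrt 3 / 2)"
proof -
  have "2 * complex_of_real pi * \<i> / 3 = Complex 0 (2 * pi / 3)"
    by (simp add: complex_eq_iff)
  then have "omega = cis (2 * pi / 3)"
    by (simp add: omega_def exp_eq_polar)
  then show ?thesis
    by (simp add: complex_eq_iff cos_120 sin_120)
qed

lemma cnj_omega: "cnj omega = -1 - omega"
  by (simp add: omega_eq complex_eq_iff)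

lemma omega_squared: "omega * omega = cnj omega"
  by (simp add: omega_eq complex_eq_iff)

lemma cnj_omega_squared: "cnj omega * cnj omega = omega"
  by (simp add: omega_eq complex_eq_iff)

lemma omega_mult_cnj_omega: "omega * cnj omega = 1"
  by (simp add: omega_eq complex_eq_iff)

lemma theta_eq: "theta = 2 * omega + 1"
  by (simp add: theta_def cnj_omega)

lemma theta_squared: "theta * theta = -3"
  by (simp add: theta_eq omega_eq complex_eq_iff algebra_simps)

lemma theta_nonzero: "theta \<noteq> 0"
  using theta_squared by auto

definition eis :: "real \<Rightarrow> real \<Rightarrow> complex" where
  "eis a b = of_real a + of_real b * omega"

lemma eis_eq: "eis a b = Complex (a - b / 2) (sqrt 3 / 2 * b)"
  by (simp add: eis_def omega_eq complex_eq_iff)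

lemma eis_inject: "eis a b = eis c d \<longleftrightarrow> a = c \<and> b = d"
  by (auto simp: eis_eq)

lemma eis_add: "eis a b + eis c d = eis (a + c) (b + d)"
  by (simp add: eis_def algebra_simps)

lemma theta_mult_eis: "theta * eis a b = eis (a - 2 * b) (2 * a - b)"
  by (simp add: eis_eq theta_eq omega_eq complex_eq_iff field_simps)

lemma inner_eis: "inner (eis a b) (eis c d) = a * c - (a * d + b * c) / 2 + b * d"
  by (simp add: eis_eq inner_complex_def algebra_simps)

lemma inner_theta_mult: "inner (theta * z) (theta * w) = 3 * inner z w"
  by (simp add: inner_complex_def theta_eq omega_eq algebra_simps)

lemma eisenstein_iff: "z \<in> eisenstein \<longleftrightarrow> (\<exists>m n. z = eis (of_int m) (of_int n))"
  by (simp add: eisenstein_def eis_def)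

lemma eis_of_int_in_eisenstein: "eis (of_int m) (of_int n) \<in> eisenstein"
  using eisenstein_iff by blast

lemma eisenstein_of_int: "of_int m \<in> eisenstein"
  using eis_of_int_in_eisenstein[of m 0] by (simp add: eis_def)

lemma eisenstein_omega: "omega \<in> eisenstein"
  using eis_of_int_in_eisenstein[of 0 1] by (simp add: eis_def)

lemma eisenstein_add:
  assumes "a \<in> eisenstein" "b \<in> eisenstein"
  shows "a + b \<in> eisenstein"
proof -
  obtain m n p q where "a = eis (of_int m) (of_int n)" "b = eis (of_int p) (of_int q)"
    using assms by (auto simp: eisenstein_iff)
  then have "a + b = eis (of_int (m + p)) (of_int (n + q))"
    by (simp add: eis_add)
  then show ?thesis
    using eisenstein_iff by blast
qed

lemma eisenstein_uminus:
  assumes "a \<in> eisenstein"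
  shows "- a \<in> eisenstein"
proof -
  obtain m n where "a = eis (of_int m) (of_int n)"
    using assms by (auto simp: eisenstein_iff)
  then have "- a = eis (of_int (- m)) (of_int (- n))"
    by (simp add: eis_def)
  then show ?thesis
    using eisenstein_iff by blast
qed

lemma eis_mult: "eis a b * eis c d = eis (a * c - b * d) (a * d + b * c - b * d)"
  by (simp add: eis_eq complex_eq_iff field_simps)

lemma eisenstein_mult:
  assumes "a \<in> eisenstein" "b \<in> eisenstein"
  shows "a * b \<in> eisenstein"
proof -
  obtain m n p q where "a = eis (of_int m) (of_int n)" "b = eis (of_int p) (of_int q)"
    using assms by (auto simp: eisenstein_iff)
  then have "a * b = eis (of_int (m * p - n * q)) (of_int (m * q + n * p - n * q))"
    by (simp add: eis_mult)
  then show ?thesis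
    using eisenstein_iff by blast
qed

lemma eisenstein_diff:
  assumes "a \<in> eisenstein" "b \<in> eisenstein"
  shows "a - b \<in> eisenstein"
  using eisenstein_add[OF assms(1) eisenstein_uminus[OF assms(2)]] by simp

lemma eisenstein_cnj_omega: "cnj omega \<in> eisenstein"
  unfolding cnj_omega using eisenstein_diff[OF eisenstein_of_int[of "-1"] eisenstein_omega] by simp

lemmas eisenstein_closed =
  eisenstein_of_int eisenstein_omega eisenstein_cnj_omega
  eisenstein_add eisenstein_uminus eisenstein_diff eisenstein_mult

lemma theta_dvd_eis_iff:
  "(\<exists>s\<in>eisenstein. eis (of_int A) (of_int B) = theta * s) \<longleftrightarrow> 3 dvd (A + B)"
proof
  assume "\<exists>s\<in>eisenstein. eis (of_int A) (of_int B) = theta * s"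
  then obtain p q where "eis (of_int A) (of_int B) = theta * eis (of_int p) (of_int q)"
    by (metis eisenstein_iff)
  then have "A = p - 2 * q" "B = 2 * p - q"
    unfolding theta_mult_eis eis_inject by linarith+
  then show "3 dvd (A + B)"
    by presburger
next
  assume "3 dvd (A + B)"
  then obtain K where K: "A + B = 3 * K"
    by blast
  have "theta * eis (of_int (2 * K - A)) (of_int (K - A)) = eis (of_int A) (of_int B)"
    unfolding theta_mult_eis eis_inject using K by simp
  then show "\<exists>s\<in>eisenstein. eis (of_int A) (of_int B) = theta * s"
    using eis_of_int_in_eisenstein by metis
qed

lemma theta_dvd_eis_sum_iff:
  "(\<exists>s\<in>eisenstein. eis (of_int m1) (of_int n1) + eis (of_int m2) (of_int n2) +
      eis (of_int m3) (of_int n3) = theta * s) \<longleftrightarrow> 3 dvd (m1 + n1 + m2 + n2 + m3 + n3)"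
proof -
  have "eis (of_int m1) (of_int n1) + eis (of_int m2) (of_int n2) + eis (of_int m3) (of_int n3) =
      eis (of_int (m1 + m2 + m3)) (of_int (n1 + n2 + n3))"
    by (simp add: eis_add)
  moreover have "m1 + m2 + m3 + (n1 + n2 + n3) = m1 + n1 + m2 + n2 + m3 + n3"
    by simp
  ultimately show ?thesis
    using theta_dvd_eis_iff by metis
qed

definition zero_sum_lattice :: "(complex^3) set" where
  "zero_sum_lattice = {theta *s vector [y1, y2, y3] | y1 y2 y3 s.
     y1 \<in> eisenstein \<and> y2 \<in> eisenstein \<and> y3 \<in> eisenstein \<and> s \<in> eisenstein \<and>
     y1 + y2 + y3 = theta * s}"

lemma zero_sum_lattice_iff:
  "x \<in> zero_sum_lattice \<longleftrightarrow> (\<exists>m1 n1 m2 n2 m3 n3. 3 dvd (m1 + n1 + m2 + n2 + m3 + n3) \<and>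
    x = theta *s vector [eis (of_int m1) (of_int n1), eis (of_int m2) (of_int n2), eis (of_int m3) (of_int n3)])"
    (is "_ \<longleftrightarrow> (\<exists>m1 n1 m2 n2 m3 n3. ?P m1 n1 m2 n2 m3 n3)")
proof
  assume "x \<in> zero_sum_lattice"
  then obtain y1 y2 y3 s where y: "y1 \<in> eisenstein" "y2 \<in> eisenstein" "y3 \<in> eisenstein"
    and s: "s \<in> eisenstein" "y1 + y2 + y3 = theta * s" and x: "x = theta *s vector [y1, y2, y3]"
    unfolding zero_sum_lattice_def by blast
  obtain m1 n1 m2 n2 m3 n3 where "y1 = eis (of_int m1) (of_int n1)" "y2 = eis (of_int m2) (of_int n2)"
    "y3 = eis (of_int m3) (of_int n3)"
    using y unfolding eisenstein_iff by blast
  moreover have "3 dvd (m1 + n1 + m2 + n2 + m3 + n3)"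
    unfolding theta_dvd_eis_sum_iff[symmetric] using s calculation by blast
  ultimately have "?P m1 n1 m2 n2 m3 n3"
    using x by simp
  then show "\<exists>m1 n1 m2 n2 m3 n3. ?P m1 n1 m2 n2 m3 n3"
    by blast
next
  assume "\<exists>m1 n1 m2 n2 m3 n3. ?P m1 n1 m2 n2 m3 n3"
  then obtain m1 n1 m2 n2 m3 n3 where "?P m1 n1 m2 n2 m3 n3"
    by blast
  moreover have "\<exists>s\<in>eisenstein. eis (of_int m1) (of_int n1) + eis (of_int m2) (of_int n2) +
      eis (of_int m3) (of_int n3) = theta * s"
    unfolding theta_dvd_eis_sum_iff using calculation by simp
  ultimately show "x \<in> zero_sum_lattice"
    unfolding zero_sum_lattice_def using eis_of_int_in_eisenstein by blast
qed

definition scale_last :: "complex \<Rightarrow> complex^3 \<Rightarrow> complex^3" where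
  "scale_last u x = vector [x$1, x$2, u * x$3]"

lemma scale_last_vector [simp]: "scale_last u (vector [a, b, c]) = vector [a, b, u * c]"
  by (simp add: scale_last_def)

lemma scale_last_scale_last: "scale_last u (scale_last v x) = scale_last (u * v) x"
  by (simp add: scale_last_def mult.assoc)

lemma eis_span3_scale_last:
  "eis_span3 (scale_last u r1) (scale_last u r2) (scale_last u r3) = scale_last u ` eis_span3 r1 r2 r3"
proof -
  have linear: "scale_last u (a *s r1 + b *s r2 + c *s r3) =
      a *s scale_last u r1 + b *s scale_last u r2 + c *s scale_last u r3" for a b c
    by (simp add: scale_last_def vec_eq_iff forall_3 algebra_simps)
  show ?thesis
  proof
    show "eis_span3 (scale_last u r1) (scale_last u r2) (scale_last u r3) \<subseteq>
        scale_last u ` eis_span3 r1 r2 r3"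
    proof
      fix x assume "x \<in> eis_span3 (scale_last u r1) (scale_last u r2) (scale_last u r3)"
      then obtain a b c where "a \<in> eisenstein" "b \<in> eisenstein" "c \<in> eisenstein"
        and "x = scale_last u (a *s r1 + b *s r2 + c *s r3)"
        unfolding eis_span3_def linear by blast
      then show "x \<in> scale_last u ` eis_span3 r1 r2 r3"
        unfolding eis_span3_def by blast
    qed
    show "scale_last u ` eis_span3 r1 r2 r3 \<subseteq>
        eis_span3 (scale_last u r1) (scale_last u r2) (scale_last u r3)"
      unfolding eis_span3_def by (fastforce simp: linear)
  qed
qed

lemma Lambda3_eq: "Lambda3 = scale_last omega ` Lambda2"
proof -
  have "vector [1, omega, 1] = scale_last omega (vector [1, omega, cnj omega])"
    "vector [1, cnj omega, cnj omega] = scale_last omega (vector [1, cnj omega, omega])"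
    by (simp_all only: scale_last_vector omega_mult_cnj_omega omega_squared mult_1_right)
  then show ?thesis
    unfolding Lambda2_def Lambda3_def eis_span3_scale_last[symmetric] by simp
qed

lemma Lambda4_eq: "Lambda4 = scale_last (cnj omega) ` Lambda2"
proof -
  have "vector [1, omega, omega] = scale_last (cnj omega) (vector [1, omega, cnj omega])"
    "vector [1, cnj omega, 1] = scale_last (cnj omega) (vector [1, cnj omega, omega])"
    by (simp_all only: scale_last_vector omega_mult_cnj_omega cnj_omega_squared mult_1_right
        mult.commute[of "cnj omega" omega])
  then show ?thesis
    unfolding Lambda2_def Lambda4_def eis_span3_scale_last[symmetric] by simp
qed

lemma zero_sum_lattice_subset_Lambda1: "zero_sum_lattice \<subseteq> Lambda1"
proof
  fix x assume "x \<in> zero_sum_lattice"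
  then obtain y1 y2 y3 where y: "y1 \<in> eisenstein" "y2 \<in> eisenstein" "y3 \<in> eisenstein"
    and x: "x = theta *s vector [y1, y2, y3]"
    unfolding zero_sum_lattice_def by blast
  have "x = y1 *s vector [theta, 0, 0] + y2 *s vector [0, theta, 0] + y3 *s vector [0, 0, theta]"
    unfolding x by (simp add: vec_eq_iff forall_3)
  then show "x \<in> Lambda1"
    unfolding Lambda1_def eis_span3_def using y by blast
qed

lemma zero_sum_lattice_subset_Lambda2: "zero_sum_lattice \<subseteq> Lambda2"
proof
  fix x assume "x \<in> zero_sum_lattice"
  then obtain y1 y2 y3 s where y: "y2 \<in> eisenstein" "y3 \<in> eisenstein" "s \<in> eisenstein"
    and sum: "y1 + y2 + y3 = theta * s" and x: "x = theta *s vector [y1, y2, y3]"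
    unfolding zero_sum_lattice_def by blast
  \<comment> \<open>the rows of the matrix of \<open>Lambda2\<close> are orthogonal of norm 3, so the
    coefficients are the inner products with them divided by 3\<close>
  define a where "a = - s"
  define b where "b = - (s + omega * y2 - cnj omega * y3)"
  define c where "c = - (s - cnj omega * y2 + omega * y3)"
  have "1 + omega + cnj omega = 0"
    by (simp add: cnj_omega)
  then have "x = a *s vector [1, 1, 1] + b *s vector [1, omega, cnj omega] + c *s vector [1, cnj omega, omega]"
    unfolding x a_def b_def c_def vec_eq_iff forall_3 vector_3 vector_add_component vector_smult_component
    using sum theta_def theta_squared omega_mult_cnj_omega omega_squared cnj_omega_squared
    by (intro conjI; algebra)
  moreover have "a \<in> eisenstein" "b \<in> eisenstein" "c \<in> eisenstein"
    unfolding a_def b_def c_def using y by (auto intro!: eisenstein_closed)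
  ultimately show "x \<in> Lambda2"
    unfolding Lambda2_def eis_span3_def by blast
qed

lemma scale_last_in_zero_sum_lattice:
  assumes "x \<in> zero_sum_lattice" "u \<in> eisenstein" "t \<in> eisenstein" "u - 1 = theta * t"
  shows "scale_last u x \<in> zero_sum_lattice"
proof -
  obtain y1 y2 y3 s where y: "y1 \<in> eisenstein" "y2 \<in> eisenstein" "y3 \<in> eisenstein" "s \<in> eisenstein"
    and sum: "y1 + y2 + y3 = theta * s" and x: "x = theta *s vector [y1, y2, y3]"
    using assms(1) unfolding zero_sum_lattice_def by blast
  have "scale_last u x = theta *s vector [y1, y2, u * y3]"
    unfolding x by (simp add: scale_last_def vec_eq_iff forall_3)
  moreover have "y1 + y2 + u * y3 = theta * (s + t * y3)"
    using sum assms(4) by (simp add: algebra_simps)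
  moreover have "u * y3 \<in> eisenstein" "s + t * y3 \<in> eisenstein"
    using y assms(2,3) by (auto intro: eisenstein_closed)
  ultimately show ?thesis
    unfolding zero_sum_lattice_def using y by blast
qed

lemma Lambda1_inter_Lambda2_subset: "Lambda1 \<inter> Lambda2 \<subseteq> zero_sum_lattice"
proof
  fix x assume x: "x \<in> Lambda1 \<inter> Lambda2"
  then obtain y1 y2 y3 where y: "y1 \<in> eisenstein" "y2 \<in> eisenstein" "y3 \<in> eisenstein"
    and x1: "x = y1 *s vector [theta, 0, 0] + y2 *s vector [0, theta, 0] + y3 *s vector [0, 0, theta]"
    unfolding Lambda1_def eis_span3_def by blast
  obtain a b c where a: "a \<in> eisenstein"
    and x2: "x = a *s vector [1, 1, 1] + b *s vector [1, omega, cnj omega] + c *s vector [1, cnj omega, omega]"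
    using x unfolding Lambda2_def eis_span3_def by blast
  have x_eq: "x = theta *s vector [y1, y2, y3]"
    unfolding x1 by (simp add: vec_eq_iff forall_3)
  have "theta * (y1 + y2 + y3) = x$1 + x$2 + x$3"
    unfolding x_eq by (simp add: algebra_simps)
  also have "\<dots> = 3 * a"
    unfolding x2 by (simp add: cnj_omega algebra_simps)
  also have "\<dots> = theta * (theta * - a)"
    using theta_squared by (simp add: mult.assoc[symmetric])
  finally have "y1 + y2 + y3 = theta * - a"
    using theta_nonzero mult_left_cancel by blast
  then show "x \<in> zero_sum_lattice"
    unfolding zero_sum_lattice_def x_eq using y a eisenstein_uminus by blast
qed

lemma Lambda_inter_eq_zero_sum_lattice:
  "Lambda1 \<inter> Lambda2 \<inter> Lambda3 \<inter> Lambda4 = zero_sum_lattice"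
proof
  show "Lambda1 \<inter> Lambda2 \<inter> Lambda3 \<inter> Lambda4 \<subseteq> zero_sum_lattice"
    using Lambda1_inter_Lambda2_subset by blast
next
  have unscale: "x = scale_last u (scale_last v x)" if "u * v = 1" for u v x
    using that by (simp add: scale_last_scale_last scale_last_def vec_eq_iff forall_3)
  have shift: "cnj omega - 1 = theta * omega" "omega - 1 = theta * (1 + omega)"
    by (simp_all add: theta_eq omega_eq complex_eq_iff)
  have "1 + omega \<in> eisenstein"
    using eisenstein_add[OF eisenstein_of_int[of 1] eisenstein_omega] by simp
  then have "scale_last (cnj omega) x \<in> zero_sum_lattice" "scale_last omega x \<in> zero_sum_lattice"
    if "x \<in> zero_sum_lattice" for x
    using scale_last_in_zero_sum_lattice[OF that eisenstein_cnj_omega eisenstein_omega shift(1)]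
      scale_last_in_zero_sum_lattice[OF that eisenstein_omega _ shift(2)] by simp_all
  moreover have "x = scale_last omega (scale_last (cnj omega) x)"
    "x = scale_last (cnj omega) (scale_last omega x)" for x
    using unscale omega_mult_cnj_omega by (simp_all add: mult.commute)
  ultimately have "zero_sum_lattice \<subseteq> Lambda3" "zero_sum_lattice \<subseteq> Lambda4"
    unfolding Lambda3_eq Lambda4_eq using zero_sum_lattice_subset_Lambda2 by (metis image_eqI subsetD subsetI)+
  then show "zero_sum_lattice \<subseteq> Lambda1 \<inter> Lambda2 \<inter> Lambda3 \<inter> Lambda4"
    using zero_sum_lattice_subset_Lambda1 zero_sum_lattice_subset_Lambda2 by blast
qed

lemma exhaust_8: "i = 0 \<or> i = 1 \<or> i = 2 \<or> i = 3 \<or> i = 4 \<or> i = 5 \<or> i = 6 \<or> i = 7" for i :: 8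
proof (induct i)
  case (of_int z)
  then have "z = 0 \<or> z = 1 \<or> z = 2 \<or> z = 3 \<or> z = 4 \<or> z = 5 \<or> z = 6 \<or> z = 7"
    by fastforce
  then show ?case
    by auto
qed

lemma forall_8: "(\<forall>i::8. P i) \<longleftrightarrow> P 0 \<and> P 1 \<and> P 2 \<and> P 3 \<and> P 4 \<and> P 5 \<and> P 6 \<and> P 7"
  by (metis exhaust_8)

lemma sum_8: "sum f (UNIV :: 8 set) = f 0 + f 1 + f 2 + f 3 + f 4 + f 5 + f 6 + f 7"
proof -
  have UNIV_8: "(UNIV :: 8 set) = {0, 1, 2, 3, 4, 5, 6, 7}"
    using exhaust_8 by blast
  show ?thesis
    unfolding UNIV_8 by (simp add: ac_simps)
qed

definition E6_root1 :: "real^8" where "E6_root1 = axis 0 1 - axis 1 1"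
definition E6_root2 :: "real^8" where "E6_root2 = axis 1 1 - axis 2 1"
definition E6_root3 :: "real^8" where "E6_root3 = axis 2 1 - axis 3 1"
definition E6_root4 :: "real^8" where "E6_root4 = axis 3 1 - axis 4 1"
definition E6_root5 :: "real^8" where "E6_root5 = axis 3 1 + axis 4 1"
definition E6_root6 :: "real^8" where "E6_root6 = (\<chi> _. 1 / 2)"

lemmas E6_root_defs = E6_root1_def E6_root2_def E6_root3_def E6_root4_def E6_root5_def E6_root6_def

lemma inner_E6_roots:
  "inner y E6_root1 = y$0 - y$1" "inner y E6_root2 = y$1 - y$2" "inner y E6_root3 = y$2 - y$3"
  "inner y E6_root4 = y$3 - y$4" "inner y E6_root5 = y$3 + y$4"
  "inner y E6_root6 = (y$0 + y$1 + y$2 + y$3 + y$4 + y$5 + y$6 + y$7) / 2"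
  by (simp_all add: E6_root_defs inner_diff_right inner_add_right inner_axis)
    (simp add: inner_vec_def sum_8 add_divide_distrib)

lemma in_E6I:
  assumes "\<forall>i. x$i \<in> \<int>" "(\<Sum>i\<in>UNIV. x$i) = 2 * of_int k" "x$5 = x$6" "x$6 = x$7"
  shows "x \<in> E6"
  using assms unfolding E6_def E8_def E6_space_def by blast

lemma E6_roots_in_E6:
  "E6_root1 \<in> E6" "E6_root2 \<in> E6" "E6_root3 \<in> E6" "E6_root4 \<in> E6" "E6_root5 \<in> E6" "E6_root6 \<in> E6"
proof -
  have sum_axis: "(\<Sum>i\<in>UNIV. axis j 1 $ i) = (1 :: real)" for j :: 8
    by (simp add: axis_def)
  show "E6_root1 \<in> E6" "E6_root2 \<in> E6" "E6_root3 \<in> E6" "E6_root4 \<in> E6"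
    by (rule in_E6I[where k = 0]; simp add: E6_root_defs sum_subtractf sum_axis; simp add: axis_def)+
  show "E6_root5 \<in> E6"
    by (rule in_E6I[where k = 1]; simp add: E6_root5_def sum.distrib sum_axis; simp add: axis_def)
  have "(1/2 :: real) + 1/2 \<in> \<int>"
    by simp
  then show "E6_root6 \<in> E6"
    unfolding E6_def E8_def E6_space_def E6_root6_def by (auto simp: sum_8 intro!: exI[of _ 2])
qed

lemma E8_coords_integral:
  assumes "x \<in> E8"
  shows "x$i - x$j \<in> \<int>" "2 * x$i \<in> \<int>"
proof -
  have "(\<forall>i. x$i \<in> \<int>) \<or> (\<forall>i. x$i + 1/2 \<in> \<int>)"
    using assms unfolding E8_def by blast
  then have "x$i - x$j \<in> \<int> \<and> 2 * x$i \<in> \<int>"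
  proof
    assume "\<forall>i. x$i \<in> \<int>"
    then show ?thesis
      by (simp add: Ints_diff Ints_mult)
  next
    assume half: "\<forall>i. x$i + 1/2 \<in> \<int>"
    have "(x$i + 1/2) - (x$j + 1/2) \<in> \<int>" "2 * (x$i + 1/2) - 1 \<in> \<int>"
      by (intro Ints_diff Ints_mult Ints_numeral Ints_1 half[rule_format])+
    then show ?thesis
      by (simp add: algebra_simps)
  qed
  then show "x$i - x$j \<in> \<int>" "2 * x$i \<in> \<int>"
    by simp_all
qed

lemma E6_integer_combination:
  assumes "x \<in> E6"
  obtains c1 c2 c3 c4 c5 c6 where "c1 \<in> \<int>" "c2 \<in> \<int>" "c3 \<in> \<int>" "c4 \<in> \<int>" "c5 \<in> \<int>" "c6 \<in> \<int>"
    and "x = c1 *\<^sub>R E6_root1 + c2 *\<^sub>R E6_root2 + c3 *\<^sub>R E6_root3 + c4 *\<^sub>R E6_root4 +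
      c5 *\<^sub>R E6_root5 + c6 *\<^sub>R E6_root6"
proof -
  have x67: "x$6 = x$5" "x$7 = x$5"
    using assms unfolding E6_def E6_space_def by simp_all
  obtain K :: int where K: "(\<Sum>i\<in>UNIV. x$i) = 2 * of_int K"
    using assms unfolding E6_def E8_def by blast
  have sum: "x$0 + x$1 + x$2 + x$3 + x$4 + 3 * x$5 = 2 * of_int K"
    using K by (simp add: sum_8 x67)
  have integral: "x$i - x$j \<in> \<int>" "2 * x$i \<in> \<int>" for i j
    using assms E8_coords_integral unfolding E6_def by blast+
  define c1 where "c1 = x$0 - x$5"
  define c2 where "c2 = (x$0 - x$5) + (x$1 - x$5)"
  define c3 where "c3 = (x$0 - x$5) + (x$1 - x$5) + (x$2 - x$5)"
  define c4 where "c4 = of_int K - (x$4 - x$5) - 2 * (2 * x$5)"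
  define c5 where "c5 = of_int K - 2 * (2 * x$5)"
  define c6 where "c6 = 2 * x$5"
  have "c1 \<in> \<int>" "c2 \<in> \<int>" "c3 \<in> \<int>" "c4 \<in> \<int>" "c5 \<in> \<int>" "c6 \<in> \<int>"
    unfolding c1_def c2_def c3_def c4_def c5_def c6_def
    by (intro integral Ints_add Ints_diff Ints_mult Ints_of_int Ints_numeral)+
  moreover have "x = c1 *\<^sub>R E6_root1 + c2 *\<^sub>R E6_root2 + c3 *\<^sub>R E6_root3 + c4 *\<^sub>R E6_root4 +
      c5 *\<^sub>R E6_root5 + c6 *\<^sub>R E6_root6"
    unfolding vec_eq_iff forall_8 using sum
    by (simp add: E6_root_defs axis_def c1_def c2_def c3_def c4_def c5_def c6_def x67 field_simps)
  ultimately show ?thesis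
    using that by blast
qed

lemma E6_dual_iff:
  "y \<in> E6_dual \<longleftrightarrow> y \<in> E6_space \<and>
    inner y E6_root1 \<in> \<int> \<and> inner y E6_root2 \<in> \<int> \<and> inner y E6_root3 \<in> \<int> \<and>
    inner y E6_root4 \<in> \<int> \<and> inner y E6_root5 \<in> \<int> \<and> inner y E6_root6 \<in> \<int>"
  (is "_ \<longleftrightarrow> ?integral")
proof
  assume "y \<in> E6_dual"
  then show ?integral
    unfolding E6_dual_def using E6_roots_in_E6 by blast
next
  assume y: ?integral
  have "inner y x \<in> \<int>" if x_E6: "x \<in> E6" for x
  proof -
    obtain c1 c2 c3 c4 c5 c6 where c: "c1 \<in> \<int>" "c2 \<in> \<int>" "c3 \<in> \<int>" "c4 \<in> \<int>" "c5 \<in> \<int>" "c6 \<in> \<int>"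
      and x: "x = c1 *\<^sub>R E6_root1 + c2 *\<^sub>R E6_root2 + c3 *\<^sub>R E6_root3 + c4 *\<^sub>R E6_root4 +
        c5 *\<^sub>R E6_root5 + c6 *\<^sub>R E6_root6"
      using E6_integer_combination[OF x_E6] by blast
    show ?thesis
      unfolding x inner_add_right inner_scaleR_right using c y by (intro Ints_add Ints_mult; simp)
  qed
  then show "y \<in> E6_dual"
    unfolding E6_dual_def using y by blast
qed

lemma E6_space_dual_basis:
  "\<exists>y\<in>E6_space. inner y E6_root1 = j1 \<and> inner y E6_root2 = j2 \<and> inner y E6_root3 = j3 \<and>
    inner y E6_root4 = j4 \<and> inner y E6_root5 = j5 \<and> inner y E6_root6 = j6"
proof -
  define y4 where "y4 = (j5 - j4) / 2"
  define y3 where "y3 = (j4 + j5) / 2"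
  define y2 where "y2 = y3 + j3"
  define y1 where "y1 = y2 + j2"
  define y0 where "y0 = y1 + j1"
  define t where "t = (2 * j6 - (y0 + y1 + y2 + y3 + y4)) / 3"
  define y :: "real^8" where "y = (\<chi> i. if i = 0 then y0 else if i = 1 then y1 else if i = 2 then y2
    else if i = 3 then y3 else if i = 4 then y4 else t)"
  have "y$0 = y0" "y$1 = y1" "y$2 = y2" "y$3 = y3" "y$4 = y4" "y$5 = t" "y$6 = t" "y$7 = t"
    unfolding y_def by simp_all
  then show ?thesis
    unfolding inner_E6_roots E6_space_def
    by (intro bexI[of _ y]) (simp_all add: y0_def y1_def y2_def y3_def y4_def t_def field_simps)
qed

text \<open>The images of the basis of \<open>E6*\<close> dual to \<open>E6_root1, \<dots>, E6_root6\<close>, chosen in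
  \<open>zero_sum_lattice\<close> with Gram matrix 9/2 times that of the dual basis.\<close>

definition E6_dual_coords_map ::
    "real \<Rightarrow> real \<Rightarrow> real \<Rightarrow> real \<Rightarrow> real \<Rightarrow> real \<Rightarrow> complex^3" where
  "E6_dual_coords_map j1 j2 j3 j4 j5 j6 = theta *s vector
     [eis (- j1) (- j1 - j2 - j3 - j4 - j5 + j6),
      eis (- j1 - 2 * j2 - 2 * j3 - j4 - j5) (j3 + j5 - j6),
      eis (j3 + j4 + j5) (j3 + j4)]"

definition E6_embedding :: "real^8 \<Rightarrow> complex^3" where
  "E6_embedding y = E6_dual_coords_map (inner y E6_root1) (inner y E6_root2) (inner y E6_root3)
     (inner y E6_root4) (inner y E6_root5) (inner y E6_root6)"

lemma linear_E6_embedding: "linear E6_embedding"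
proof (rule linearI)
  fix x y :: "real^8"
  show "E6_embedding (x + y) = E6_embedding x + E6_embedding y"
    by (simp add: E6_embedding_def E6_dual_coords_map_def vec_eq_iff forall_3 inner_add_left
        eis_def algebra_simps)
next
  fix r and x :: "real^8"
  show "E6_embedding (r *\<^sub>R x) = r *\<^sub>R E6_embedding x"
    unfolding E6_embedding_def inner_scaleR_left vec_eq_iff forall_3 vector_scaleR_component
    by (simp add: E6_dual_coords_map_def scaleR_conv_of_real eis_def algebra_simps)
qed

lemma inner_E6_embedding:
  assumes "x \<in> E6_space" "y \<in> E6_space"
  shows "inner (E6_embedding x) (E6_embedding y) = 9/2 * inner x y"
proof -
  have "x$6 = x$5" "x$7 = x$5" "y$6 = y$5" "y$7 = y$5"
    using assms by (auto simp: E6_space_def)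
  then show ?thesis
    unfolding E6_embedding_def inner_E6_roots
    unfolding E6_dual_coords_map_def inner_vec_def sum_3 sum_8 vector_3
      vector_smult_component inner_theta_mult inner_eis inner_real_def
    by (simp add: field_simps)
qed

lemma E6_dual_coords_map_of_int_in_zero_sum_lattice:
  "E6_dual_coords_map (of_int j1) (of_int j2) (of_int j3) (of_int j4) (of_int j5) (of_int j6)
    \<in> zero_sum_lattice"
proof -
  have "E6_dual_coords_map (of_int j1) (of_int j2) (of_int j3) (of_int j4) (of_int j5) (of_int j6) =
    theta *s vector
     [eis (of_int (- j1)) (of_int (- j1 - j2 - j3 - j4 - j5 + j6)),
      eis (of_int (- j1 - 2 * j2 - 2 * j3 - j4 - j5)) (of_int (j3 + j5 - j6)),
      eis (of_int (j3 + j4 + j5)) (of_int (j3 + j4))]"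
    unfolding E6_dual_coords_map_def by simp
  moreover have "3 dvd (- j1 + (- j1 - j2 - j3 - j4 - j5 + j6) + (- j1 - 2 * j2 - 2 * j3 - j4 - j5) +
      (j3 + j5 - j6) + (j3 + j4 + j5) + (j3 + j4))"
    by presburger
  ultimately show ?thesis
    unfolding zero_sum_lattice_iff by blast
qed

lemma zero_sum_lattice_E6_dual_coordsE:
  assumes "x \<in> zero_sum_lattice"
  obtains j1 j2 j3 j4 j5 j6 :: int where
    "x = E6_dual_coords_map (of_int j1) (of_int j2) (of_int j3) (of_int j4) (of_int j5) (of_int j6)"
proof -
  obtain m1 n1 m2 n2 m3 n3 K where K: "m1 + n1 + m2 + n2 + m3 + n3 = 3 * K"
    and x: "x = theta *s vector
      [eis (of_int m1) (of_int n1), eis (of_int m2) (of_int n2), eis (of_int m3) (of_int n3)]"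
    using assms unfolding zero_sum_lattice_iff by blast
  define j3 where "j3 = 2 * K - m1 - m2 - m3"
  have n2: "n2 = 3 * K - m1 - m2 - m3 - n1 - n3"
    using K by simp
  have "x = E6_dual_coords_map (of_int (- m1)) (of_int (m1 - K)) (of_int j3) (of_int (n3 - j3))
      (of_int (m3 - n3)) (of_int (n1 + m3 - K))"
    unfolding x E6_dual_coords_map_def j3_def n2 by (simp add: algebra_simps)
  then show ?thesis
    using that by blast
qed

lemma E6_embedding_image: "E6_embedding ` E6_dual = zero_sum_lattice"
proof
  show "E6_embedding ` E6_dual \<subseteq> zero_sum_lattice"
  proof
    fix z assume "z \<in> E6_embedding ` E6_dual"
    then obtain y where "y \<in> E6_dual" and z: "z = E6_embedding y"
      by blast
    then obtain j1 j2 j3 j4 j5 j6 where "inner y E6_root1 = of_int j1" "inner y E6_root2 = of_int j2"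
      "inner y E6_root3 = of_int j3" "inner y E6_root4 = of_int j4" "inner y E6_root5 = of_int j5"
      "inner y E6_root6 = of_int j6"
      unfolding E6_dual_iff by (metis Ints_cases)
    then show "z \<in> zero_sum_lattice"
      unfolding z E6_embedding_def by (simp add: E6_dual_coords_map_of_int_in_zero_sum_lattice)
  qed
  show "zero_sum_lattice \<subseteq> E6_embedding ` E6_dual"
  proof
    fix z assume "z \<in> zero_sum_lattice"
    then obtain j1 j2 j3 j4 j5 j6 :: int where
      z: "z = E6_dual_coords_map (of_int j1) (of_int j2) (of_int j3) (of_int j4) (of_int j5) (of_int j6)"
      by (rule zero_sum_lattice_E6_dual_coordsE)
    obtain y where "y \<in> E6_space" and coords: "inner y E6_root1 = of_int j1" "inner y E6_root2 = of_int j2"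
      "inner y E6_root3 = of_int j3" "inner y E6_root4 = of_int j4" "inner y E6_root5 = of_int j5"
      "inner y E6_root6 = of_int j6"
      using E6_space_dual_basis by blast
    then have "y \<in> E6_dual"
      unfolding E6_dual_iff by simp
    moreover have "E6_embedding y = z"
      unfolding E6_embedding_def coords z ..
    ultimately show "z \<in> E6_embedding ` E6_dual"
      by blast
  qed
qed

theorem mainTheorem6:
  shows "similar_to_E6_dual (Lambda1 \<inter> Lambda2 \<inter> Lambda3 \<inter> Lambda4)"
  unfolding similar_to_E6_dual_def Lambda_inter_eq_zero_sum_lattice
proof (intro exI[of _ E6_embedding] exI[of _ "9/2"] conjI ballI)
  show "linear E6_embedding"
    by (rule linear_E6_embedding)
  show "(0::real) < 9/2"
    by simp
  show "inner (E6_embedding x) (E6_embedding y) = 9/2 * inner x y" if "x \<in> E6_space" "y \<in> E6_space" for x y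
    using that by (rule inner_E6_embedding)
  show "E6_embedding ` E6_dual = zero_sum_lattice"
    by (rule E6_embedding_image)
qed

end
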